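(* In the large-election setting of the context, let $\rho=\frac{q-1/2}{1-q}$. If $v_\ell/v_w>\rho$, then there exists $N$ such that for all odd $n>N$ the $n$-voter collective choice problem is adversely correlated; otherwise (if $v_\ell/v_w\le\rho$), for every odd $n$ the $n$-voter collective choice problem is advantageously correlated.
   Context: Fix $q\in[1/2,1)$, $v_w,v_\ell>0$ with $v_\ell/v_w<q/(1-q)$, and $\lambda\in(0,1)$. For each odd $n\ge3$, the $n$-voter collective choice problem is: voters $1,\dots,n$ vote for $p^*$ or $p_*$; a policy wins iff it gets more than $\tau=(n-1)/2$ votes. Exactly $\lceil qn\rceil$ voters are winners, the set of winners being uniformly distributed among subsets of that size; a winner gets payoff $v_w$ higher from $p^*$ than from $p_*$, a loser gets payoff $v_\ell$ lower (so $V_i^d\in\{v_w,-v_\ell\}$). Independently, each voter with probability $\lambda$ privately learns whether she is a winner (good news, or bad news) and otherwise receives an uninformative signal $s^0$. Let $G,B$ be the numbers of voters with good and bad news and $V^G(\kappa)=E[V_i^d\mid G=\kappa,B=0,S_i=s^0]$. The problem is adversely correlated if $V^G(\kappa)<0$ for some $\kappa\in\{1,\dots,\tau\}$ and advantageously correlated otherwise. *)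

theory Defs
  imports Complex_Main
begin

text \<open>The state of the world
  consists of the set W of winners (uniform among subsets of {1..n} of size ceil(q n))
  and the set I of informed voters (each voter independently informed with probability lam).
  An informed voter j receives good news iff j is a winner, bad news otherwise;
  an uninformed voter receives the uninformative signal s0.\<close>

definition num_winners :: "real \<Rightarrow> nat \<Rightarrow> nat" where
  "num_winners q n = nat \<lceil>q * real n\<rceil>"

definition winner_sets :: "real \<Rightarrow> nat \<Rightarrow> nat set set" where
  "winner_sets q n = {W. W \<subseteq> {1..n} \<and> card W = num_winners q n}"

definition outcomes :: "real \<Rightarrow> nat \<Rightarrow> (nat set \<times> nat set) set" where
  "outcomes q n = winner_sets q n \<times> Pow {1..n}"

definition weight :: "real \<Rightarrow> real \<Rightarrow> nat \<Rightarrow> nat set \<times> nat set \<Rightarrow> real" where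
  "weight q lam n \<omega> =
     (1 / real (card (winner_sets q n))) * lam ^ card (snd \<omega>) * (1 - lam) ^ (n - card (snd \<omega>))"

text \<open>Payoff difference V_i^d between p* and p_* for voter i.\<close>
definition payoff_diff :: "real \<Rightarrow> real \<Rightarrow> nat \<Rightarrow> nat set \<Rightarrow> real" where
  "payoff_diff vw vl i W = (if i \<in> W then vw else - vl)"

definition good_news :: "nat set \<times> nat set \<Rightarrow> nat" where
  "good_news \<omega> = card (snd \<omega> \<inter> fst \<omega>)"

definition bad_news :: "nat set \<times> nat set \<Rightarrow> nat" where
  "bad_news \<omega> = card (snd \<omega> - fst \<omega>)"

definition cond_event :: "real \<Rightarrow> nat \<Rightarrow> nat \<Rightarrow> nat \<Rightarrow> (nat set \<times> nat set) set" where
  "cond_event q n i k = {\<omega> \<in> outcomes q n. good_news \<omega> = k \<and> bad_news \<omega> = 0 \<and> i \<notin> snd \<omega>}"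

text \<open>V^G(k) = E[V_i^d | G = k, B = 0, S_i = s0], taken for voter i = 1
  (by symmetry it does not depend on i).\<close>
definition VG :: "real \<Rightarrow> real \<Rightarrow> real \<Rightarrow> real \<Rightarrow> nat \<Rightarrow> nat \<Rightarrow> real" where
  "VG q vw vl lam n k =
     (\<Sum>\<omega>\<in>cond_event q n 1 k. weight q lam n \<omega> * payoff_diff vw vl 1 (fst \<omega>))
     / (\<Sum>\<omega>\<in>cond_event q n 1 k. weight q lam n \<omega>)"

definition adversely_correlated :: "real \<Rightarrow> real \<Rightarrow> real \<Rightarrow> real \<Rightarrow> nat \<Rightarrow> bool" where
  "adversely_correlated q vw vl lam n \<longleftrightarrow>
     (\<exists>k\<in>{1..(n - 1) div 2}. VG q vw vl lam n k < 0)"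

definition advantageously_correlated :: "real \<Rightarrow> real \<Rightarrow> real \<Rightarrow> real \<Rightarrow> nat \<Rightarrow> bool" where
  "advantageously_correlated q vw vl lam n \<longleftrightarrow> \<not> adversely_correlated q vw vl lam n"

end

theory Submission
  imports Defs
begin

text \<open>Let m = \<lceil>q n\<rceil> be the number of winners. Conditional on G = k, B = 0 and voter 1 being
  uninformed, the k informed voters are winners and the remaining m - k winners are spread
  uniformly over the n - k uninformed voters, so
  V^G(k) = (v_w (m - k) - v_l (n - m)) / (n - k), independently of \<lambda>.
  The numerator is smallest at k = \<tau> = (n - 1)/2, and since q n \<le> m < q n + 1 it lies there
  between n d + v_w/2 and n d + 3 v_w/2 + v_l, where d = (q - 1/2) v_w - (1 - q) v_l.
  So V^G(k) \<ge> 0 for all k \<le> \<tau> when d \<ge> 0, and V^G(\<tau>) < 0 for large n when d < 0.\<close>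

lemma card_subsets_avoiding:
  assumes "finite A"
  shows "card {B. B \<subseteq> A \<and> card B = k \<and> a \<notin> B} = card (A - {a}) choose k"
proof -
  have "{B. B \<subseteq> A \<and> card B = k \<and> a \<notin> B} = {B. B \<subseteq> A - {a} \<and> card B = k}"
    by blast
  then show ?thesis
    using n_subsets[of "A - {a}" k] assms by simp
qed

lemma card_subsets_containing:
  assumes "finite A" and "a \<in> A"
  shows "card {B. B \<subseteq> A \<and> card B = Suc k \<and> a \<in> B} = card (A - {a}) choose k"
proof -
  let ?all = "{B. B \<subseteq> A \<and> card B = Suc k}"
  let ?avoiding = "{B. B \<subseteq> A \<and> card B = Suc k \<and> a \<notin> B}"
  have "card (?all - ?avoiding) = card ?all - card ?avoiding"
    using assms(1) by (intro card_Diff_subset) auto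
  moreover have "{B. B \<subseteq> A \<and> card B = Suc k \<and> a \<in> B} = ?all - ?avoiding"
    by blast
  moreover have "card ?all = Suc (card (A - {a})) choose Suc k"
    using n_subsets[OF assms(1)] card_Suc_Diff1[OF assms] by simp
  ultimately show ?thesis
    using card_subsets_avoiding[OF assms(1)] by simp
qed

lemma sum_subsets_if_mem:
  fixes \<alpha> \<beta> :: "'b::comm_semiring_1"
  assumes "finite A" and "a \<in> A"
  shows "(\<Sum>B\<in>{B. B \<subseteq> A \<and> card B = Suc j}. if a \<in> B then \<alpha> else \<beta>)
    = of_nat (card (A - {a}) choose j) * \<alpha> + of_nat (card (A - {a}) choose Suc j) * \<beta>"
proof -
  let ?S = "{B. B \<subseteq> A \<and> card B = Suc j}"
  have "finite ?S"
    using assms(1) by simp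
  moreover have "?S \<inter> {B. a \<in> B} = {B. B \<subseteq> A \<and> card B = Suc j \<and> a \<in> B}"
    and "?S \<inter> - {B. a \<in> B} = {B. B \<subseteq> A \<and> card B = Suc j \<and> a \<notin> B}"
    by blast+
  ultimately show ?thesis
    using sum.If_cases[of ?S "\<lambda>B. a \<in> B" "\<lambda>_. \<alpha>" "\<lambda>_. \<beta>"]
      card_subsets_containing[OF assms] card_subsets_avoiding[OF assms(1)] assms
    by (simp add: mult_of_nat_commute)
qed

lemma binomial_double_absorb:
  "(N choose Suc j) * (Suc j choose k) * (Suc j - k) = (N choose j) * (j choose k) * (N - j)"
proof -
  have "(Suc j choose k) * (Suc j - k) = Suc j * (j choose k)"
    using binomial_absorb_comp[of "Suc j" k] by (simp add: mult.commute)
  moreover have "Suc j * (N choose Suc j) = (N - j) * (N choose j)"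
    using binomial_absorption[of j N] binomial_absorb_comp[of N j] by simp
  ultimately show ?thesis
    by (metis mult.assoc mult.commute)
qed

lemma finite_winner_sets: "finite (winner_sets q n)"
  by (simp add: winner_sets_def)

lemma cond_event_eq:
  "cond_event q n 1 k = (SIGMA W:winner_sets q n. {I. I \<subseteq> W - {1} \<and> card I = k})"
proof (rule set_eqI, clarify)
  fix W I :: "nat set"
  have "(W, I) \<in> cond_event q n 1 k \<longleftrightarrow>
      W \<in> winner_sets q n \<and> I \<subseteq> {1..n} \<and> card (I \<inter> W) = k \<and> card (I - W) = 0 \<and> 1 \<notin> I"
    by (simp add: cond_event_def outcomes_def good_news_def bad_news_def)
  also have "\<dots> \<longleftrightarrow> W \<in> winner_sets q n \<and> I \<subseteq> W - {1} \<and> card I = k"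
  proof (cases "W \<in> winner_sets q n \<and> I \<subseteq> {1..n}")
    case True
    then have "finite I" "W \<subseteq> {1..n}"
      using finite_subset by (auto simp: winner_sets_def)
    then have "card (I - W) = 0 \<longleftrightarrow> I \<subseteq> W"
      by simp
    then show ?thesis
      using True by (auto simp: Int_absorb2)
  next
    case False
    then show ?thesis
      by (auto simp: winner_sets_def)
  qed
  finally show "(W, I) \<in> cond_event q n 1 k \<longleftrightarrow>
      (W, I) \<in> (SIGMA W:winner_sets q n. {I. I \<subseteq> W - {1} \<and> card I = k})"
    by simp
qed

lemma sum_cond_event:
  "(\<Sum>\<omega>\<in>cond_event q n 1 k. weight q lam n \<omega> * g (fst \<omega>))
     = 1 / real (card (winner_sets q n)) * lam ^ k * (1 - lam) ^ (n - k)
       * (\<Sum>W\<in>winner_sets q n. real (card (W - {1}) choose k) * g W)"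
proof -
  define c where "c = 1 / real (card (winner_sets q n)) * lam ^ k * (1 - lam) ^ (n - k)"
  let ?IS = "\<lambda>W. {I. I \<subseteq> W - {1} \<and> card I = k}"
  have finite_W: "finite W" if "W \<in> winner_sets q n" for W
    using that finite_subset unfolding winner_sets_def by blast
  have "(\<Sum>\<omega>\<in>cond_event q n 1 k. weight q lam n \<omega> * g (fst \<omega>))
      = (\<Sum>(W, I)\<in>(SIGMA W:winner_sets q n. ?IS W). c * g W)"
    unfolding cond_event_eq by (rule sum.cong) (auto simp: weight_def c_def)
  also have "\<dots> = (\<Sum>W\<in>winner_sets q n. \<Sum>I\<in>?IS W. c * g W)"
    by (rule sum.Sigma[symmetric]) (simp_all add: finite_winner_sets finite_W)
  also have "\<dots> = (\<Sum>W\<in>winner_sets q n. c * (real (card (W - {1}) choose k) * g W))"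
    by (rule sum.cong) (simp_all add: finite_W n_subsets)
  finally show ?thesis
    by (simp add: sum_distrib_left c_def)
qed

lemma sum_cond_event_if_winner:
  assumes "num_winners q n = Suc j" and "1 \<le> n"
  shows "(\<Sum>\<omega>\<in>cond_event q n 1 k. weight q lam n \<omega> * (if 1 \<in> fst \<omega> then a else b))
     = 1 / real (card (winner_sets q n)) * lam ^ k * (1 - lam) ^ (n - k)
       * (real (((n - 1) choose j) * (j choose k)) * a
          + real (((n - 1) choose Suc j) * (Suc j choose k)) * b)"
proof -
  have card_minus_1: "card (W - {1}) = (if 1 \<in> W then j else Suc j)"
    if "W \<in> winner_sets q n" for W
    using that assms(1) finite_subset[of W "{1..n}"] by (auto simp: winner_sets_def)
  have "(\<Sum>W\<in>winner_sets q n. real (card (W - {1}) choose k) * (if 1 \<in> W then a else b))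
      = (\<Sum>W\<in>winner_sets q n. if 1 \<in> W then real (j choose k) * a else real (Suc j choose k) * b)"
    by (intro sum.cong refl) (subst card_minus_1; simp)
  also have "\<dots> = real (((n - 1) choose j) * (j choose k)) * a
          + real (((n - 1) choose Suc j) * (Suc j choose k)) * b"
    using sum_subsets_if_mem[of "{1..n}" 1 "real (j choose k) * a" "real (Suc j choose k) * b" j] assms
    by (simp add: winner_sets_def)
  finally show ?thesis
    using sum_cond_event[where g = "\<lambda>W. if 1 \<in> W then a else b"] by simp
qed

lemma VG_eq:
  fixes q vw vl lam :: real and n k :: nat
  defines "m \<equiv> num_winners q n"
  assumes "0 < lam" and "lam < 1" and "k < m" and "m \<le> n"
  shows "VG q vw vl lam n k = (vw * (real m - real k) - vl * (real n - real m)) / (real n - real k)"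
proof -
  obtain j where j: "m = Suc j"
    using assms(4) less_imp_Suc_add by blast
  have winners: "num_winners q n = Suc j" "1 \<le> n"
    using j assms(5) by (simp_all add: m_def)
  define A where "A = real (((n - 1) choose j) * (j choose k))"
  define B where "B = real (((n - 1) choose Suc j) * (Suc j choose k))"
  define c where "c = 1 / real (card (winner_sets q n)) * lam ^ k * (1 - lam) ^ (n - k)"
  \<comment> \<open>c A and c B are the probabilities of the conditioning event with 1 \<in> W and 1 \<notin> W.\<close>
  have "c > 0"
    using assms(2,3,5) by (simp add: c_def winner_sets_def n_subsets m_def)
  have "(\<Sum>\<omega>\<in>cond_event q n 1 k. weight q lam n \<omega> * payoff_diff vw vl 1 (fst \<omega>))
      = (\<Sum>\<omega>\<in>cond_event q n 1 k. weight q lam n \<omega> * (if 1 \<in> fst \<omega> then vw else - vl))"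
    by (simp add: payoff_diff_def)
  also have "\<dots> = c * (A * vw + B * - vl)"
    unfolding A_def B_def c_def by (rule sum_cond_event_if_winner[OF winners])
  finally have num: "(\<Sum>\<omega>\<in>cond_event q n 1 k. weight q lam n \<omega> * payoff_diff vw vl 1 (fst \<omega>))
      = c * (A * vw - B * vl)"
    by simp
  have "(\<Sum>\<omega>\<in>cond_event q n 1 k. weight q lam n \<omega>)
      = (\<Sum>\<omega>\<in>cond_event q n 1 k. weight q lam n \<omega> * (if 1 \<in> fst \<omega> then 1 else 1))"
    by simp
  also have "\<dots> = c * (A * 1 + B * 1)"
    unfolding A_def B_def c_def by (rule sum_cond_event_if_winner[OF winners])
  finally have den: "(\<Sum>\<omega>\<in>cond_event q n 1 k. weight q lam n \<omega>) = c * (A + B)"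
    by simp
  have "B * (real m - real k) = A * (real n - real m)"
  proof -
    have "(n - 1 choose Suc j) * (Suc j choose k) * (m - k) = (n - 1 choose j) * (j choose k) * (n - m)"
      using binomial_double_absorb[of "n - 1" j k] j winners(2) by simp
    then have "real ((n - 1 choose Suc j) * (Suc j choose k) * (m - k))
        = real ((n - 1 choose j) * (j choose k) * (n - m))"
      by (rule arg_cong)
    then show ?thesis
      using assms(4,5) by (simp add: A_def B_def)
  qed
  moreover have "A > 0"
    using j assms(4,5) by (simp add: A_def)
  moreover have "B \<ge> 0"
    by (simp add: B_def)
  ultimately have "(A * vw - B * vl) / (A + B)
      = (vw * (real m - real k) - vl * (real n - real m)) / (real n - real k)"
    using assms(4,5) by (simp add: frac_eq_eq) (simp add: algebra_simps)
  then show ?thesis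
    unfolding VG_def num den using \<open>c > 0\<close> by simp
qed

lemma VG_neg_iff:
  fixes q vw vl lam :: real and n k :: nat
  defines "m \<equiv> num_winners q n"
  assumes "0 < lam" and "lam < 1" and "k < m" and "m \<le> n"
  shows "VG q vw vl lam n k < 0 \<longleftrightarrow> vw * (real m - real k) < vl * (real n - real m)"
proof -
  have "real k < real n"
    using assms(4,5) by simp
  then show ?thesis
    using VG_eq[of lam k q n vw vl] assms by (simp add: divide_less_0_iff)
qed

lemma num_winners_bounds:
  assumes "0 \<le> q"
  shows "q * real n \<le> real (num_winners q n)"
    and "real (num_winners q n) < q * real n + 1"
proof -
  have "real (num_winners q n) = of_int \<lceil>q * real n\<rceil>"
    using assms by (simp add: num_winners_def)
  then show "q * real n \<le> real (num_winners q n)"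
    and "real (num_winners q n) < q * real n + 1"
    by linarith+
qed

lemma num_winners_le:
  assumes "q \<le> 1"
  shows "num_winners q n \<le> n"
proof -
  have "q * real n \<le> real n"
    using assms mult_right_mono[OF assms, of "real n"] by simp
  then show ?thesis
    by (simp add: num_winners_def ceiling_le_iff nat_le_iff)
qed

lemma less_num_winners:
  assumes "1/2 \<le> q" and "2 * k < n"
  shows "k < num_winners q n"
proof -
  have "real k < 1/2 * real n"
    using assms(2) by linarith
  also have "\<dots> \<le> q * real n"
    using mult_right_mono[OF assms(1), of "real n"] by simp
  also have "\<dots> \<le> real (num_winners q n)"
    using assms(1) num_winners_bounds(1)[of q n] by simp
  finally show ?thesis
    by simp
qed

lemma adversely_correlated_eventually:
  assumes "1/2 \<le> q" and "q < 1" and "0 < vw" and "0 < vl" and "0 < lam" and "lam < 1"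
    and "(q - 1/2) * vw < (1 - q) * vl"
  shows "\<exists>N. \<forall>n. odd n \<and> n > N \<longrightarrow> adversely_correlated q vw vl lam n"
proof -
  define \<delta> where "\<delta> = (1 - q) * vl - (q - 1/2) * vw"
  have "\<delta> > 0"
    using assms(7) by (simp add: \<delta>_def)
  define N where "N = max 2 (nat \<lceil>(3/2 * vw + vl) / \<delta>\<rceil>)"
  have "adversely_correlated q vw vl lam n" if "odd n" and "n > N" for n
  proof -
    define \<tau> where "\<tau> = (n - 1) div 2"
    define m where "m = num_winners q n"
    have n_eq: "n = 2 * \<tau> + 1" and "\<tau> \<ge> 1"
      using that by (auto simp: \<tau>_def N_def elim!: oddE)
    have "\<tau> < m" and "m \<le> n" and m_less: "real m < q * real n + 1"
      using less_num_winners[OF assms(1)] num_winners_bounds(2)[of q n] num_winners_le[of q n]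
        assms(1,2) n_eq
      by (simp_all add: m_def)
    have "(3/2 * vw + vl) / \<delta> \<le> real n"
      using that(2) unfolding N_def by linarith
    then have n_large: "3/2 * vw + vl \<le> real n * \<delta>"
      using \<open>\<delta> > 0\<close> by (simp add: divide_le_eq)
    have "(vw + vl) * real m < (vw + vl) * (q * real n + 1)"
      using m_less assms(3,4) by simp
    then have "vw * (real m - real \<tau>) < vl * (real n - real m)"
      using n_large n_eq unfolding \<delta>_def by (simp add: algebra_simps)
    then have "VG q vw vl lam n \<tau> < 0"
      using VG_neg_iff[of lam \<tau> q n vw vl] assms(5,6) \<open>\<tau> < m\<close> \<open>m \<le> n\<close> by (simp add: m_def)
    then show ?thesis
      using \<open>\<tau> \<ge> 1\<close> unfolding adversely_correlated_def \<tau>_def by auto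
  qed
  then show ?thesis
    by blast
qed

lemma advantageously_correlated_if_le:
  assumes "1/2 \<le> q" and "q < 1" and "0 < vw" and "0 \<le> vl" and "0 < lam" and "lam < 1"
    and "(1 - q) * vl \<le> (q - 1/2) * vw"
  shows "advantageously_correlated q vw vl lam n"
proof -
  have "\<not> VG q vw vl lam n k < 0" if "1 \<le> k" and "2 * k \<le> n - 1" for k
  proof -
    define m where "m = num_winners q n"
    have "k < m" and "m \<le> n" and m_ge: "q * real n \<le> real m"
      using less_num_winners[OF assms(1)] num_winners_bounds(1)[of q n] num_winners_le[of q n]
        assms(1,2) that
      by (simp_all add: m_def)
    have "(vw + vl) * (q * real n) \<le> (vw + vl) * real m"
      using m_ge assms(3,4) by (simp add: mult_left_mono)
    moreover have "0 \<le> real n * ((q - 1/2) * vw - (1 - q) * vl)"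
      using assms(7) by simp
    moreover have "2 * (vw * real k) \<le> vw * (real n - 1)"
      using that assms(3) by (simp add: mult_left_mono)
    ultimately have "vl * (real n - real m) \<le> vw * (real m - real k)"
      using assms(3) by (simp add: algebra_simps)
    then show ?thesis
      using VG_neg_iff[of lam k q n vw vl] assms(5,6) \<open>k < m\<close> \<open>m \<le> n\<close> by (simp add: m_def)
  qed
  then show ?thesis
    unfolding advantageously_correlated_def adversely_correlated_def by auto
qed

theorem proposition4:
  fixes q vw vl lam :: real
  assumes "1/2 \<le> q" and "q < 1"
    and "vw > 0" and "vl > 0" and "vl / vw < q / (1 - q)"
    and "0 < lam" and "lam < 1"
  shows "(vl / vw > (q - 1/2) / (1 - q) \<longrightarrow>
            (\<exists>N. \<forall>n. odd n \<and> n > N \<longrightarrow> adversely_correlated q vw vl lam n))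
       \<and> (vl / vw \<le> (q - 1/2) / (1 - q) \<longrightarrow>
            (\<forall>n. odd n \<and> n \<ge> 3 \<longrightarrow> advantageously_correlated q vw vl lam n))"
proof -
  have ratio_iff: "(q - 1/2) / (1 - q) < vl / vw \<longleftrightarrow> (q - 1/2) * vw < (1 - q) * vl"
    using assms(2,3) by (simp add: field_simps)
  show ?thesis
    using adversely_correlated_eventually[OF assms(1,2,3,4,6,7)]
      advantageously_correlated_if_le[OF assms(1,2,3) less_imp_le[OF assms(4)] assms(6,7)]
    by (auto simp: ratio_iff not_less[symmetric])
qed

end
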